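(* Let $K$ be an oriented Legendrian knot with a front diagram $D$ whose arcs $x_1,\dots,x_n$ (pieces of $D$ from one undercrossing to the next, possibly containing cusps), numbered consecutively along the orientation, give the presentation $\operatorname{GLR}(K)=\langle x_1,\dots,x_n\mid r_1,\dots,r_n\rangle$ with $r_i\colon u^{p_i}d^{q_i}(x_i)\ast^{\varepsilon_i}x_{k_i}=x_{i+1}$ ($x_{n+1}=x_1$). For $N\ge1$, let $S_+^NS_-^N(K)$ be represented by the diagram obtained from $D$ by performing $N$ positive and $N$ negative stabilizations on the arc $x_1$, so that $\operatorname{GLR}(S_+^NS_-^N(K))=\langle x_1,\dots,x_n\mid r_1',r_2,\dots,r_n\rangle$ with $r_1'\colon u^{2N+p_1}d^{2N+q_1}(x_1)\ast^{\varepsilon_1}x_{k_1}=x_2$. Let $(X,\ast,u,d)$ be a finite block GL-rack with diagonal map $\Delta=\alpha_1\cdots\alpha_l$, blocks $A_i=\operatorname{supp}(\alpha_i)$, induced GL-quandle $(\widetilde X=\{a_1,\dots,a_l\},\tilde\ast,\tilde u,\tilde d)$ and projection $\pi$. Then, identifying homomorphisms out of these presented GL-racks with their values on $x_1,\dots,x_n$, $\operatorname{Hom}(\operatorname{GLR}(K),\widetilde X)=\operatorname{Hom}(\operatorname{GLR}(S_+^NS_-^N(K)),\widetilde X)$; that is, for every $\psi\in\operatorname{Hom}(\operatorname{GLR}(K),\widetilde X)$ there is $\psi'\in\operatorname{Hom}(\operatorname{GLR}(S_+^NS_-^N(K)),\widetilde X)$ with $\psi'(x_i)=\psi(x_i)$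 for all $i$ (and conversely). Moreover, if $|\operatorname{Lift}(\psi)|\neq0$, then $|\operatorname{Lift}(\psi')|\neq0$ if and only if $\Delta^{2N}=\operatorname{id}_X$.
   Context: A rack is a set $X$ with a binary operation $\ast$ such that for every $y\in X$ the map $x\mapsto x\ast y$ is a bijection of $X$ (inverse written $x\mapsto x\ast^{-1}y$; $\ast^{+1}=\ast$) and $(x\ast y)\ast z=(x\ast z)\ast(y\ast z)$ for all $x,y,z$. A GL-rack is a quadruple $(X,\ast,u,d)$ where $(X,\ast)$ is a rack and $u,d\colon X\to X$ are maps such that for all $x,y\in X$: $u(d(x\ast x))=d(u(x\ast x))=x$; $u(x\ast y)=u(x)\ast y$ and $d(x\ast y)=d(x)\ast y$; $x\ast u(y)=x\ast d(y)=x\ast y$ (one has $ud=du$). A GL-quandle is a GL-rack with $x\ast x=x$. Homomorphisms preserve $\ast,u,d$. The diagonal map is $\Delta(x)=x\ast x$; for finite $X$ it is a bijection with $\Delta=(u\circ d)^{-1}$. A finite GL-rack is a block GL-rack if all cycles in the disjoint cycle decomposition $\Delta=\alpha_1\cdots\alpha_l$ (fixed points counted as $1$-cycles) have the same length; the blocks are $A_i=\operatorname{supp}(\alpha_i)$. The induced GL-quandle is $\widetilde X=\{a_1,\dots,a_l\}$ with $\pi\colon X\to\widetilde X$, $\pi(A_i)=\{a_i\}$, $a_i\tilde\ast a_j=\pi(A_i\ast A_j)$, $\tilde u(a_i)=\pi(u(A_i))$, $\tilde d(a_i)=\pi(d(A_i))$ (well defined). For $\psi$ a homomorphism from a fundamental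 GL-rack $G$ to $\widetilde X$, $\operatorname{Lift}(\psi)=\{\phi\in\operatorname{Hom}(G,X):\pi\circ\phi=\psi\}$. Legendrian knots lie in $(\mathbb{R}^3,\xi_{\mathrm{std}})$ and are represented by oriented front diagrams; positive/negative stabilization $S_\pm$ inserts a zigzag ($S_+$ adds two cusps traversed downward, $S_-$ two cusps traversed upward). The fundamental GL-rack $\operatorname{GLR}(K)$ is presented by the arcs of a front diagram with the relations $r_i$ above, where $p_i$ (resp. $q_i$) is the number of cusps traversed upward (resp. downward) on the arc $x_i$, $x_{k_i}$ is the over-arc at the undercrossing ending $x_i$, and $\varepsilon_i=\pm1$ its sign; this is a Legendrian isotopy invariant. *)

theory Defs
  imports Main
begin

definition rack :: "'a set \<Rightarrow> ('a \<Rightarrow> 'a \<Rightarrow> 'a) \<Rightarrow> bool" where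
  "rack X op \<longleftrightarrow>
     (\<forall>y\<in>X. bij_betw (\<lambda>x. op x y) X X) \<and>
     (\<forall>x\<in>X. \<forall>y\<in>X. \<forall>z\<in>X. op (op x y) z = op (op x z) (op y z))"

definition gl_rack :: "'a set \<Rightarrow> ('a \<Rightarrow> 'a \<Rightarrow> 'a) \<Rightarrow> ('a \<Rightarrow> 'a) \<Rightarrow> ('a \<Rightarrow> 'a) \<Rightarrow> bool" where
  "gl_rack X op u d \<longleftrightarrow> rack X op \<and> u ` X \<subseteq> X \<and> d ` X \<subseteq> X \<and>
     (\<forall>x\<in>X. u (d (op x x)) = x \<and> d (u (op x x)) = x) \<and>
     (\<forall>x\<in>X. \<forall>y\<in>X. u (op x y) = op (u x) y \<and> d (op x y) = op (d x) y) \<and>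
     (\<forall>x\<in>X. \<forall>y\<in>X. op x (u y) = op x y \<and> op x (d y) = op x y)"

definition rstar :: "'a set \<Rightarrow> ('a \<Rightarrow> 'a \<Rightarrow> 'a) \<Rightarrow> int \<Rightarrow> 'a \<Rightarrow> 'a \<Rightarrow> 'a" where
  "rstar X op e x y = (if e = 1 then op x y else the_inv_into X (\<lambda>z. op z y) x)"

definition diag :: "('a \<Rightarrow> 'a \<Rightarrow> 'a) \<Rightarrow> 'a \<Rightarrow> 'a" where
  "diag op x = op x x"

text \<open>The support of the cycle of \<open>\<Delta>\<close> containing \<open>x\<close> (the block of \<open>x\<close>; \<open>{x}\<close> for fixed points).\<close>
definition blk :: "('a \<Rightarrow> 'a \<Rightarrow> 'a) \<Rightarrow> 'a \<Rightarrow> 'a set" where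
  "blk op x = {(diag op ^^ j) x | j. True}"

definition block_gl_rack :: "'a set \<Rightarrow> ('a \<Rightarrow> 'a \<Rightarrow> 'a) \<Rightarrow> ('a \<Rightarrow> 'a) \<Rightarrow> ('a \<Rightarrow> 'a) \<Rightarrow> bool" where
  "block_gl_rack X op u d \<longleftrightarrow> finite X \<and> gl_rack X op u d \<and>
     (\<forall>x\<in>X. \<forall>y\<in>X. card (blk op x) = card (blk op y))"

text \<open>Induced GL-quandle: carrier = set of blocks, \<open>\<pi> = blk op\<close>.\<close>
definition ind_carrier :: "'a set \<Rightarrow> ('a \<Rightarrow> 'a \<Rightarrow> 'a) \<Rightarrow> 'a set set" where
  "ind_carrier X op = blk op ` X"

definition ind_op :: "('a \<Rightarrow> 'a \<Rightarrow> 'a) \<Rightarrow> 'a set \<Rightarrow> 'a set \<Rightarrow> 'a set" where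
  "ind_op op A B = the_elem ((\<lambda>(a, b). blk op (op a b)) ` (A \<times> B))"

definition ind_map :: "('a \<Rightarrow> 'a \<Rightarrow> 'a) \<Rightarrow> ('a \<Rightarrow> 'a) \<Rightarrow> 'a set \<Rightarrow> 'a set" where
  "ind_map op f A = the_elem (blk op ` f ` A)"

text \<open>Presentation data (0-indexed arcs \<open>x_0,\<dots>,x_{n-1}\<close>): relation \<open>r_i\<close> is
  \<open>u^{p i} d^{q i}(x_i) \<ast>^{eps i} x_{k i} = x_{(i+1) mod n}\<close>.
  A homomorphism to \<open>(Y,op,u,d)\<close> is identified with its list of values on the generators.\<close>
definition pres_hom ::
  "'b set \<Rightarrow> ('b \<Rightarrow> 'b \<Rightarrow> 'b) \<Rightarrow> ('b \<Rightarrow> 'b) \<Rightarrow> ('b \<Rightarrow> 'b) \<Rightarrow>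
   nat \<Rightarrow> (nat \<Rightarrow> nat) \<Rightarrow> (nat \<Rightarrow> nat) \<Rightarrow> (nat \<Rightarrow> int) \<Rightarrow> (nat \<Rightarrow> nat) \<Rightarrow> 'b list set" where
  "pres_hom Y op u d n p q eps k =
     {ys. length ys = n \<and> set ys \<subseteq> Y \<and>
          (\<forall>i<n. rstar Y op (eps i) ((u ^^ p i) ((d ^^ q i) (ys ! i))) (ys ! k i)
                 = ys ! ((i + 1) mod n))}"

definition lift_set ::
  "'a set \<Rightarrow> ('a \<Rightarrow> 'a \<Rightarrow> 'a) \<Rightarrow> ('a \<Rightarrow> 'a) \<Rightarrow> ('a \<Rightarrow> 'a) \<Rightarrow>
   nat \<Rightarrow> (nat \<Rightarrow> nat) \<Rightarrow> (nat \<Rightarrow> nat) \<Rightarrow> (nat \<Rightarrow> int) \<Rightarrow> (nat \<Rightarrow> nat) \<Rightarrow> 'a set list \<Rightarrow> 'a list set" where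
  "lift_set X op u d n p q eps k \<psi> =
     {\<phi> \<in> pres_hom X op u d n p q eps k. map (blk op) \<phi> = \<psi>}"

end

(* Since \<Delta> = (u d)\<inverse>, stabilizing the first arc N times in each direction multiplies the
   left-hand side of its relation by u^(2N) d^(2N) = \<Delta>^(-2N), a map commuting with u, d and
   all right multiplications. \<Delta> maps every block to itself, so over the induced quandle the
   relations do not change, and over X they do not change if \<Delta>^(2N) = id.
   Conversely, let \<phi> and \<phi>' lift the same \<psi> before and after stabilization, with
   \<phi>'(x_1) = \<Delta>^j \<phi>(x_1). A relation sees its over-arc only through its block, so going once
   around the knot gives \<phi>' = \<Delta>^(-2N) \<Delta>^j \<phi> on every arc; back at x_1 this says
   \<Delta>^(2N) \<phi>'(x_1) = \<phi>'(x_1). An element is fixed by \<Delta>^(2N) iff its block size divides 2N,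
   and all blocks have the same size, so \<Delta>^(2N) = id. *)

theory Submission
  imports Defs "HOL-Combinatorics.Orbits"
begin

lemma funpow_in_set: "f ` A \<subseteq> A \<Longrightarrow> x \<in> A \<Longrightarrow> (f ^^ n) x \<in> A"
  by (induction n) auto

lemma funpow_commute_on:
  assumes "g ` A \<subseteq> A" and "\<And>x. x \<in> A \<Longrightarrow> f (g x) = g (f x)" and "x \<in> A"
  shows "f ((g ^^ n) x) = (g ^^ n) (f x)"
  using assms by (induction n) (simp_all add: funpow_in_set)

lemma funpows_commute_on:
  assumes "f ` A \<subseteq> A" and "g ` A \<subseteq> A" and "\<And>x. x \<in> A \<Longrightarrow> f (g x) = g (f x)" and "x \<in> A"
  shows "(f ^^ m) ((g ^^ n) x) = (g ^^ n) ((f ^^ m) x)"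
proof (rule funpow_commute_on[OF assms(2) _ assms(4)])
  fix y assume "y \<in> A"
  then show "(f ^^ m) (g y) = g ((f ^^ m) y)"
    using funpow_commute_on[OF assms(1), of g] assms(3) by metis
qed

lemma recurrence_commute_transfer:
  assumes "m \<le> n" and "b m = F (a m)"
    and "\<And>i. m \<le> i \<Longrightarrow> i < n \<Longrightarrow> a (Suc i) = S i (a i)"
    and "\<And>i. m \<le> i \<Longrightarrow> i < n \<Longrightarrow> b (Suc i) = S i (b i)"
    and "\<And>i. m \<le> i \<Longrightarrow> i < n \<Longrightarrow> S i (F (a i)) = F (S i (a i))"
  shows "b n = F (a n)"
  using assms(1) by (induction n rule: dec_induct) (use assms in auto)

lemma rstar_cong_right:
  assumes "x \<in> X" and "\<And>z. z \<in> X \<Longrightarrow> op z y' = op z y"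
  shows "rstar X op e x y' = rstar X op e x y"
  using assms unfolding rstar_def the_inv_into_def by (simp cong: conj_cong)

lemma pres_hom_cong:
  assumes "\<And>i y. i < n \<Longrightarrow> y \<in> Y \<Longrightarrow> (u ^^ p' i) ((d ^^ q' i) y) = (u ^^ p i) ((d ^^ q i) y)"
  shows "pres_hom Y op u d n p' q' eps k = pres_hom Y op u d n p q eps k"
  unfolding pres_hom_def using assms by (auto intro!: Collect_cong) (metis nth_mem subsetD)+

lemma commuting_funpow_add_on:
  assumes "u ` A \<subseteq> A" and "d ` A \<subseteq> A" and "\<And>y. y \<in> A \<Longrightarrow> u (d y) = d (u y)" and "y \<in> A"
  shows "(u ^^ (m + a)) ((d ^^ (m + b)) y) = (u ^^ m) ((d ^^ m) ((u ^^ a) ((d ^^ b) y)))"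
proof -
  have "(u ^^ (m + a)) ((d ^^ (m + b)) y) = (u ^^ m) ((u ^^ a) ((d ^^ m) ((d ^^ b) y)))"
    by (simp add: funpow_add)
  also have "\<dots> = (u ^^ m) ((d ^^ m) ((u ^^ a) ((d ^^ b) y)))"
    using funpows_commute_on[OF assms(1-3) funpow_in_set[OF assms(2,4)]] by simp
  finally show ?thesis .
qed

lemma pres_hom_stabilize:
  assumes "u ` Y \<subseteq> Y" and "d ` Y \<subseteq> Y" and "\<And>y. y \<in> Y \<Longrightarrow> u (d y) = d (u y)"
    and "\<And>y. y \<in> Y \<Longrightarrow> (u ^^ m) ((d ^^ m) y) = y"
  shows "pres_hom Y op u d n (p(0 := m + p 0)) (q(0 := m + q 0)) eps k = pres_hom Y op u d n p q eps k"
proof (rule pres_hom_cong)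
  fix i y assume y: "y \<in> Y"
  have "(u ^^ (m + a)) ((d ^^ (m + b)) y) = (u ^^ a) ((d ^^ b) y)" for a b
  proof -
    have "(u ^^ (m + a)) ((d ^^ (m + b)) y) = (u ^^ m) ((d ^^ m) ((u ^^ a) ((d ^^ b) y)))"
      by (rule commuting_funpow_add_on[OF assms(1-3) y])
    also have "\<dots> = (u ^^ a) ((d ^^ b) y)"
      by (rule assms(4)[OF funpow_in_set[OF assms(1) funpow_in_set[OF assms(2) y]]])
    finally show ?thesis .
  qed
  then show "(u ^^ (p(0 := m + p 0)) i) ((d ^^ (q(0 := m + q 0)) i) y) = (u ^^ p i) ((d ^^ q i) y)"
    by simp
qed

locale finite_gl_rack =
  fixes X :: "'a set" and op :: "'a \<Rightarrow> 'a \<Rightarrow> 'a" and u d :: "'a \<Rightarrow> 'a"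
  assumes gl_rack: "gl_rack X op u d" and finite: "finite X"
begin

abbreviation \<Delta> :: "'a \<Rightarrow> 'a" where "\<Delta> \<equiv> diag op"

lemma op_bij: "y \<in> X \<Longrightarrow> bij_betw (\<lambda>x. op x y) X X"
  and self_distrib: "x \<in> X \<Longrightarrow> y \<in> X \<Longrightarrow> z \<in> X \<Longrightarrow> op (op x y) z = op (op x z) (op y z)"
  using gl_rack unfolding gl_rack_def rack_def by blast+

lemma op_closed: "x \<in> X \<Longrightarrow> y \<in> X \<Longrightarrow> op x y \<in> X"
  using op_bij bij_betw_apply by fastforce

lemma u_closed: "u ` X \<subseteq> X" and d_closed: "d ` X \<subseteq> X"
  and ud_diag: "x \<in> X \<Longrightarrow> u (d (\<Delta> x)) = x" and du_diag: "x \<in> X \<Longrightarrow> d (u (\<Delta> x)) = x"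
  and u_op: "x \<in> X \<Longrightarrow> y \<in> X \<Longrightarrow> u (op x y) = op (u x) y"
  and d_op: "x \<in> X \<Longrightarrow> y \<in> X \<Longrightarrow> d (op x y) = op (d x) y"
  and op_u: "x \<in> X \<Longrightarrow> y \<in> X \<Longrightarrow> op x (u y) = op x y"
  and op_d: "x \<in> X \<Longrightarrow> y \<in> X \<Longrightarrow> op x (d y) = op x y"
  using gl_rack unfolding gl_rack_def diag_def by blast+

lemma diag_closed: "\<Delta> ` X \<subseteq> X"
  by (auto simp: diag_def op_closed)

lemma diag_bij: "bij_betw \<Delta> X X"
proof -
  have "inj_on \<Delta> X"
    by (metis ud_diag inj_onI)
  then show ?thesis
    using diag_closed finite by (simp add: bij_betw_def endo_inj_surj)
qed

lemma diag_ud: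
  assumes "x \<in> X" shows "\<Delta> (u (d x)) = x"
proof -
  obtain z where "z \<in> X" and "x = \<Delta> z"
    using diag_bij assms by (auto simp: bij_betw_def)
  then show ?thesis by (simp add: ud_diag)
qed

lemma ud_commute: "x \<in> X \<Longrightarrow> u (d x) = d (u x)"
  using du_diag[of "u (d x)"] diag_ud u_closed d_closed by (auto simp: image_subset_iff)

lemma op_diag:
  assumes "x \<in> X" and "y \<in> X" shows "op x (\<Delta> y) = op x y"
proof -
  have "\<Delta> y \<in> X" and "d (\<Delta> y) \<in> X"
    using assms(2) diag_closed d_closed by auto
  then have "op x (\<Delta> y) = op x (u (d (\<Delta> y)))"
    using assms(1) by (simp add: op_u op_d)
  then show ?thesis
    using assms(2) by (simp add: ud_diag)
qed

lemma diag_funpow_udpow: "x \<in> X \<Longrightarrow> (\<Delta> ^^ m) ((u ^^ m) ((d ^^ m) x)) = x"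
proof (induction m arbitrary: x)
  case (Suc m)
  have "(u ^^ Suc m) ((d ^^ Suc m) x) = (u ^^ m) (u ((d ^^ m) (d x)))"
    by (simp only: funpow_Suc_right o_apply)
  also have "u ((d ^^ m) (d x)) = (d ^^ m) (u (d x))"
    using funpow_commute_on[OF d_closed, of u] ud_commute d_closed Suc.prems by blast
  finally have "(\<Delta> ^^ m) ((u ^^ Suc m) ((d ^^ Suc m) x)) = u (d x)"
    using Suc u_closed d_closed by (simp add: image_subset_iff)
  then show ?case
    using diag_ud Suc.prems by simp
qed simp

definition equivariant :: "('a \<Rightarrow> 'a) \<Rightarrow> bool" where
  "equivariant F \<longleftrightarrow> F ` X \<subseteq> X \<and> (\<forall>x\<in>X. \<forall>y\<in>X. F (op x y) = op (F x) y) \<and>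
     (\<forall>x\<in>X. F (u x) = u (F x) \<and> F (d x) = d (F x))"

lemma equivariant_id: "equivariant id"
  unfolding equivariant_def by simp

lemma equivariant_comp: "equivariant F \<Longrightarrow> equivariant G \<Longrightarrow> equivariant (F \<circ> G)"
  unfolding equivariant_def image_subset_iff by simp

lemma equivariant_funpow: "equivariant F \<Longrightarrow> equivariant (F ^^ n)"
  by (induction n) (simp_all add: equivariant_id equivariant_comp)

lemma equivariant_u: "equivariant u"
  unfolding equivariant_def using u_closed by (auto simp: u_op ud_commute)

lemma equivariant_d: "equivariant d"
  unfolding equivariant_def using d_closed by (auto simp: d_op ud_commute)

lemma equivariant_diag: "equivariant \<Delta>"
  unfolding equivariant_def using diag_closed u_closed d_closed
  by (auto simp: diag_def self_distrib u_op d_op op_u op_d image_subset_iff)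

lemma equivariant_closed: "equivariant F \<Longrightarrow> x \<in> X \<Longrightarrow> F x \<in> X"
  unfolding equivariant_def by blast

lemma equivariant_word:
  assumes "equivariant F" and "x \<in> X"
  shows "F ((u ^^ a) ((d ^^ b) x)) = (u ^^ a) ((d ^^ b) (F x))"
proof -
  have "F ` X \<subseteq> X" and "\<And>x. x \<in> X \<Longrightarrow> F (u x) = u (F x)" and "\<And>x. x \<in> X \<Longrightarrow> F (d x) = d (F x)"
    using assms(1) unfolding equivariant_def by blast+
  then show ?thesis
    using funpow_commute_on[OF u_closed] funpow_commute_on[OF d_closed]
      funpow_in_set[OF d_closed assms(2)] assms(2) by metis
qed

lemma equivariant_rstar:
  assumes "equivariant F" and "x \<in> X" and "y \<in> X"
  shows "F (rstar X op e x y) = rstar X op e (F x) y"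
proof (cases "e = 1")
  case True
  then show ?thesis using assms unfolding equivariant_def rstar_def by simp
next
  case False
  have bij: "bij_betw (\<lambda>z. op z y) X X"
    using op_bij assms(3) .
  define z where "z = the_inv_into X (\<lambda>z. op z y) x"
  have z: "z \<in> X" "op z y = x"
    unfolding z_def using bij assms(2) f_the_inv_into_f_bij_betw[OF bij]
    by (auto simp: bij_betw_def intro: the_inv_into_into)
  then have "the_inv_into X (\<lambda>z. op z y) (F x) = F z"
    using bij assms by (auto simp: bij_betw_def equivariant_def intro!: the_inv_into_f_eq)
  then show ?thesis
    using False by (simp add: rstar_def z_def)
qed

lemma u_diag: "x \<in> X \<Longrightarrow> u (\<Delta> x) = \<Delta> (u x)"
  using u_closed by (auto simp: diag_def u_op op_u)

lemma d_diag: "x \<in> X \<Longrightarrow> d (\<Delta> x) = \<Delta> (d x)"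
  using d_closed by (auto simp: diag_def d_op op_d)

lemma self_in_orbit_diag:
  assumes "x \<in> X" shows "x \<in> orbit \<Delta> x"
proof -
  define D where "D y = (if y \<in> X then \<Delta> y else y)" for y
  have "D permutes X"
    using diag_bij by (intro bij_imp_permutes) (auto simp: D_def cong: bij_betw_cong)
  then have "x \<in> orbit D x"
    using finite by (intro permutation_self_in_orbit) (auto simp: permutation_permutes)
  moreover have "orbit D x = orbit \<Delta> x"
    using diag_closed by (intro orbit_cong0[OF assms]) (auto simp: D_def)
  ultimately show ?thesis by simp
qed

lemma blk_eq_orbit: "x \<in> X \<Longrightarrow> blk op x = orbit \<Delta> x"
  using orbit_altdef_self_in[OF self_in_orbit_diag] by (simp add: blk_def)

lemma funpow_diag_in_blk: "(\<Delta> ^^ j) x \<in> blk op x"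
  unfolding blk_def by blast

lemma in_blk_self: "x \<in> blk op x"
  using funpow_diag_in_blk[of 0] by simp

lemma blk_eqI:
  assumes "x \<in> X" and "y \<in> blk op x" shows "blk op y = blk op x"
proof -
  have "y \<in> X"
    using assms funpow_in_set[OF diag_closed] by (auto simp: blk_def)
  have "y \<in> orbit \<Delta> x" and "x \<in> orbit \<Delta> x"
    using assms self_in_orbit_diag blk_eq_orbit by auto
  then have "orbit \<Delta> y = orbit \<Delta> x"
    by (auto intro: orbit_trans orbit_swap)
  then show ?thesis
    using assms(1) \<open>y \<in> X\<close> by (simp add: blk_eq_orbit)
qed

lemma funpow_diag_fixes_iff:
  assumes "x \<in> X" shows "(\<Delta> ^^ m) x = x \<longleftrightarrow> card (blk op x) dvd m"
proof -
  define c where "c = funpow_dist1 \<Delta> x x"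
  have orbit: "x \<in> orbit \<Delta> x"
    using assms by (rule self_in_orbit_diag)
  have "card (blk op x) = c"
    using orbit_conv_funpow_dist1[OF orbit] inj_on_funpow_dist1[OF orbit]
    by (simp add: blk_eq_orbit[OF assms] card_image c_def)
  moreover have "(\<Delta> ^^ m) x = (\<Delta> ^^ (m mod c)) x"
    using funpow_mod_eq[OF funpow_dist1_prop[OF orbit]] by (simp add: c_def)
  moreover have "(\<Delta> ^^ (m mod c)) x \<noteq> x" if "m mod c \<noteq> 0"
    using funpow_dist1_least[of "m mod c" \<Delta> x x] that by (simp add: c_def)
  ultimately show ?thesis
    by (auto simp: dvd_eq_mod_eq_0)
qed

lemma block_funpow_diag_id:
  assumes "\<And>x y. x \<in> X \<Longrightarrow> y \<in> X \<Longrightarrow> card (blk op x) = card (blk op y)"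
    and "x \<in> X" and "(\<Delta> ^^ m) x = x" and "y \<in> X"
  shows "(\<Delta> ^^ m) y = y"
  using assms funpow_diag_fixes_iff by metis

lemma ind_map_blk:
  assumes "F ` X \<subseteq> X" and "\<And>x. x \<in> X \<Longrightarrow> F (\<Delta> x) = \<Delta> (F x)" and "x \<in> X"
  shows "ind_map op F (blk op x) = blk op (F x)"
proof -
  have "blk op (F y) = blk op (F x)" if y: "y \<in> blk op x" for y
  proof -
    obtain j where "y = (\<Delta> ^^ j) x"
      using y unfolding blk_def by blast
    then have "F y = (\<Delta> ^^ j) (F x)"
      using funpow_commute_on[OF diag_closed] assms by metis
    then show ?thesis
      using assms by (intro blk_eqI) (auto simp: blk_def)
  qed
  then have "blk op ` F ` blk op x = {blk op (F x)}"
    using in_blk_self by blast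
  then show ?thesis
    by (simp add: ind_map_def)
qed

lemma ind_map_funpow_blk:
  assumes "F ` X \<subseteq> X" and "\<And>x. x \<in> X \<Longrightarrow> F (\<Delta> x) = \<Delta> (F x)" and "x \<in> X"
  shows "(ind_map op F ^^ n) (blk op x) = blk op ((F ^^ n) x)"
  by (induction n) (use assms funpow_in_set[OF assms(1)] in \<open>simp_all add: ind_map_blk\<close>)

lemma op_funpow_diag: "x \<in> X \<Longrightarrow> y \<in> X \<Longrightarrow> op x ((\<Delta> ^^ j) y) = op x y"
  by (induction j) (simp_all add: op_diag funpow_in_set[OF diag_closed])

lemma rstar_blk:
  assumes "x \<in> X" and "y \<in> X" and "y' \<in> blk op y"
  shows "rstar X op e x y' = rstar X op e x y"
proof -
  obtain j where "y' = (\<Delta> ^^ j) y"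
    using assms(3) unfolding blk_def by blast
  then show ?thesis
    using assms(1,2) by (auto intro: rstar_cong_right simp: op_funpow_diag)
qed

lemma pres_hom_stabilize_ind:
  "pres_hom (ind_carrier X op) (ind_op op) (ind_map op u) (ind_map op d) n (p(0 := m + p 0)) (q(0 := m + q 0)) eps k
     = pres_hom (ind_carrier X op) (ind_op op) (ind_map op u) (ind_map op d) n p q eps k"
proof (rule pres_hom_stabilize)
  have u: "(ind_map op u ^^ a) (blk op x) = blk op ((u ^^ a) x)"
    and d: "(ind_map op d ^^ a) (blk op x) = blk op ((d ^^ a) x)" if "x \<in> X" for x a
    using that by (simp_all add: ind_map_funpow_blk u_closed d_closed u_diag d_diag)
  have u1: "ind_map op u (blk op x) = blk op (u x)"
    and d1: "ind_map op d (blk op x) = blk op (d x)" if "x \<in> X" for x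
    using u[OF that, of 1] d[OF that, of 1] by simp_all
  show "ind_map op u ` ind_carrier X op \<subseteq> ind_carrier X op"
    and "ind_map op d ` ind_carrier X op \<subseteq> ind_carrier X op"
    using u1 d1 u_closed d_closed by (auto simp: ind_carrier_def)
  fix B assume "B \<in> ind_carrier X op"
  then obtain x where x: "x \<in> X" and B: "B = blk op x"
    by (auto simp: ind_carrier_def)
  have "u x \<in> X" and "d x \<in> X"
    using x u_closed d_closed by auto
  then show "ind_map op u (ind_map op d B) = ind_map op d (ind_map op u B)"
    by (simp add: B u1 d1 x ud_commute)
  have udx: "(u ^^ m) ((d ^^ m) x) \<in> X"
    using funpow_in_set[OF u_closed funpow_in_set[OF d_closed x]] .
  have "x \<in> blk op ((u ^^ m) ((d ^^ m) x))"
    using funpow_diag_in_blk[of m "(u ^^ m) ((d ^^ m) x)"] by (simp add: diag_funpow_udpow x)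
  then have "blk op ((u ^^ m) ((d ^^ m) x)) = B"
    using blk_eqI[OF udx] by (simp add: B)
  then show "(ind_map op u ^^ m) ((ind_map op d ^^ m) B) = B"
    using funpow_in_set[OF d_closed x] by (simp add: B u d x)
qed

lemma pres_hom_stabilize_diag_id:
  assumes "\<forall>x\<in>X. (\<Delta> ^^ m) x = x"
  shows "pres_hom X op u d n (p(0 := m + p 0)) (q(0 := m + q 0)) eps k = pres_hom X op u d n p q eps k"
proof (rule pres_hom_stabilize[OF u_closed d_closed])
  fix y assume y: "y \<in> X"
  then show "u (d y) = d (u y)"
    by (rule ud_commute)
  have "(u ^^ m) ((d ^^ m) y) \<in> X"
    using funpow_in_set[OF u_closed funpow_in_set[OF d_closed y]] .
  then show "(u ^^ m) ((d ^^ m) y) = y"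
    using diag_funpow_udpow[OF y, of m] assms by simp
qed

definition arc_step :: "nat \<Rightarrow> nat \<Rightarrow> int \<Rightarrow> 'a \<Rightarrow> 'a \<Rightarrow> 'a" where
  "arc_step a b e y x = rstar X op e ((u ^^ a) ((d ^^ b) x)) y"

lemma pres_hom_arc_step:
  "\<phi> \<in> pres_hom X op u d n p q eps k \<Longrightarrow> i < n \<Longrightarrow>
     \<phi> ! (Suc i mod n) = arc_step (p i) (q i) (eps i) (\<phi> ! k i) (\<phi> ! i)"
  by (simp add: pres_hom_def arc_step_def)

lemma arc_step_equivariant:
  assumes "equivariant F" and "x \<in> X" and "y \<in> X"
  shows "arc_step a b e y (F x) = F (arc_step a b e y x)"
  using assms equivariant_rstar[OF assms(1)] equivariant_word[OF assms(1)]
  by (simp add: arc_step_def funpow_in_set u_closed d_closed)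

lemma arc_step_blk:
  assumes "x \<in> X" and "y \<in> X" and "y' \<in> blk op y"
  shows "arc_step a b e y' x = arc_step a b e y x"
  unfolding arc_step_def using assms by (intro rstar_blk funpow_in_set u_closed d_closed)

lemma arc_step_stabilized:
  assumes "x \<in> X"
  shows "arc_step (m + a) (m + b) e y x = arc_step a b e y ((u ^^ m) ((d ^^ m) x))"
proof -
  have "equivariant ((u ^^ m) \<circ> (d ^^ m))"
    by (intro equivariant_comp equivariant_funpow equivariant_u equivariant_d)
  have "(u ^^ (m + a)) ((d ^^ (m + b)) x) = (u ^^ m) ((d ^^ m) ((u ^^ a) ((d ^^ b) x)))"
    by (rule commuting_funpow_add_on[OF u_closed d_closed ud_commute assms])
  also have "\<dots> = (u ^^ a) ((d ^^ b) ((u ^^ m) ((d ^^ m) x)))"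
    using equivariant_word[OF \<open>equivariant _\<close> assms, of a b] by simp
  finally show ?thesis
    by (simp add: arc_step_def)
qed

lemma pres_hom_stabilized_first:
  assumes "\<phi> \<in> pres_hom X op u d n (p(0 := m + p 0)) (q(0 := m + q 0)) eps k" and "0 < n"
  shows "\<phi> ! (1 mod n) = arc_step (p 0) (q 0) (eps 0) (\<phi> ! k 0) ((u ^^ m) ((d ^^ m) (\<phi> ! 0)))"
proof -
  have "\<phi> ! 0 \<in> X"
    using assms by (auto simp: pres_hom_def dest: nth_mem)
  then show ?thesis
    using pres_hom_arc_step[OF assms] by (simp add: arc_step_stabilized)
qed

lemma stabilized_lift_diag_fixed:
  assumes "0 < n" and k: "\<forall>i<n. k i < n"
    and \<phi>: "\<phi> \<in> pres_hom X op u d n p q eps k"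
    and \<phi>': "\<phi>' \<in> pres_hom X op u d n (p(0 := m + p 0)) (q(0 := m + q 0)) eps k"
    and blocks: "map (blk op) \<phi>' = map (blk op) \<phi>"
  shows "(\<Delta> ^^ m) (\<phi>' ! 0) = \<phi>' ! 0"
proof -
  have len: "length \<phi> = n" "length \<phi>' = n" and "set \<phi> \<subseteq> X" "set \<phi>' \<subseteq> X"
    using \<phi> \<phi>' by (auto simp: pres_hom_def)
  then have X: "\<phi> ! i \<in> X" "\<phi>' ! i \<in> X" if "i < n" for i
    using that by (auto dest: nth_mem)
  have same_blk: "\<phi>' ! i \<in> blk op (\<phi> ! i)" if "i < n" for i
    using in_blk_self[of "\<phi>' ! i"] blocks that len by (metis nth_map)
  define S where "S i = arc_step (p i) (q i) (eps i) (\<phi> ! k i)" for i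
  have \<phi>_step: "\<phi> ! (Suc i mod n) = S i (\<phi> ! i)" if "i < n" for i
    using pres_hom_arc_step[OF \<phi> that] by (simp add: S_def)
  have \<phi>'_step: "\<phi>' ! (Suc i mod n) = S i (\<phi>' ! i)" if "0 < i" "i < n" for i
    using pres_hom_arc_step[OF \<phi>' \<open>i < n\<close>] that k X by (auto simp: S_def intro!: arc_step_blk same_blk)
  define H where "H = (u ^^ m) \<circ> (d ^^ m)"
  have H: "equivariant H"
    unfolding H_def by (intro equivariant_comp equivariant_funpow equivariant_u equivariant_d)
  have \<phi>'_first: "\<phi>' ! (1 mod n) = S 0 (H (\<phi>' ! 0))"
    unfolding pres_hom_stabilized_first[OF \<phi>' \<open>0 < n\<close>] S_def
    using \<open>0 < n\<close> k X equivariant_closed[OF H] by (auto simp: H_def intro!: arc_step_blk same_blk)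
  obtain j where j: "\<phi>' ! 0 = (\<Delta> ^^ j) (\<phi> ! 0)"
    using same_blk[OF \<open>0 < n\<close>] unfolding blk_def by blast
  define F where "F = H \<circ> (\<Delta> ^^ j)"
  have F: "equivariant F"
    unfolding F_def by (intro equivariant_comp equivariant_funpow H equivariant_diag)
  have S_commute: "S i (F x) = F (S i x)" if "i < n" "x \<in> X" for i x
    using arc_step_equivariant[OF F] that k X by (simp add: S_def)
  have "\<phi>' ! (n mod n) = F (\<phi> ! (n mod n))"
  proof (rule recurrence_commute_transfer[where m = 1 and S = S and
        a = "\<lambda>i. \<phi> ! (i mod n)" and b = "\<lambda>i. \<phi>' ! (i mod n)"])
    show "\<phi>' ! (1 mod n) = F (\<phi> ! (1 mod n))"
      using \<phi>'_first j S_commute \<phi>_step[of 0] \<open>0 < n\<close> X by (simp add: F_def)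
  qed (use \<open>0 < n\<close> \<phi>_step \<phi>'_step S_commute X in auto)
  then have "\<phi>' ! 0 = H (\<phi>' ! 0)"
    using j by (simp add: F_def)
  then show ?thesis
    using diag_funpow_udpow[OF X(2)[OF \<open>0 < n\<close>], of m] by (simp add: H_def)
qed

lemma finite_lift_set: "finite (lift_set X op u d n p q eps k \<psi>)"
  by (rule finite_subset[OF _ finite_lists_length_eq[OF finite, of n]])
    (auto simp: lift_set_def pres_hom_def)

lemma lift_set_stabilized_nonempty_iff:
  assumes same_card: "\<And>x y. x \<in> X \<Longrightarrow> y \<in> X \<Longrightarrow> card (blk op x) = card (blk op y)"
    and "0 < n" and "\<forall>i<n. k i < n"
    and lift: "lift_set X op u d n p q eps k \<psi> \<noteq> {}"
  shows "lift_set X op u d n (p(0 := m + p 0)) (q(0 := m + q 0)) eps k \<psi> \<noteq> {} \<longleftrightarrow> (\<forall>x\<in>X. (\<Delta> ^^ m) x = x)"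
proof
  assume "lift_set X op u d n (p(0 := m + p 0)) (q(0 := m + q 0)) eps k \<psi> \<noteq> {}"
  then obtain \<phi>' where \<phi>': "\<phi>' \<in> pres_hom X op u d n (p(0 := m + p 0)) (q(0 := m + q 0)) eps k"
    and "map (blk op) \<phi>' = \<psi>"
    by (auto simp: lift_set_def)
  moreover obtain \<phi> where "\<phi> \<in> pres_hom X op u d n p q eps k" and "map (blk op) \<phi> = \<psi>"
    using lift by (auto simp: lift_set_def)
  ultimately have "(\<Delta> ^^ m) (\<phi>' ! 0) = \<phi>' ! 0"
    using assms(2,3) by (intro stabilized_lift_diag_fixed) auto
  moreover have "\<phi>' ! 0 \<in> X"
    using \<phi>' \<open>0 < n\<close> by (auto simp: pres_hom_def dest: nth_mem)
  ultimately show "\<forall>x\<in>X. (\<Delta> ^^ m) x = x"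
    using block_funpow_diag_id[OF same_card] by blast
next
  assume "\<forall>x\<in>X. (\<Delta> ^^ m) x = x"
  then show "lift_set X op u d n (p(0 := m + p 0)) (q(0 := m + q 0)) eps k \<psi> \<noteq> {}"
    using lift by (simp add: lift_set_def pres_hom_stabilize_diag_id)
qed

end

theorem lemma4p3:
  fixes X :: "'a set" and op :: "'a \<Rightarrow> 'a \<Rightarrow> 'a" and u d :: "'a \<Rightarrow> 'a"
    and n N :: nat and p q k :: "nat \<Rightarrow> nat" and eps :: "nat \<Rightarrow> int"
  assumes blockX: "block_gl_rack X op u d"
    and n_pos: "n \<ge> 1" and N_pos: "N \<ge> 1"
    and k_range: "\<forall>i<n. k i < n"
    and eps_range: "\<forall>i<n. eps i = 1 \<or> eps i = -1"
  defines "p' \<equiv> p(0 := 2 * N + p 0)" and "q' \<equiv> q(0 := 2 * N + q 0)"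
    and "Xt \<equiv> ind_carrier X op" and "opt \<equiv> ind_op op"
    and "ut \<equiv> ind_map op u" and "dt \<equiv> ind_map op d"
  shows "pres_hom Xt opt ut dt n p q eps k = pres_hom Xt opt ut dt n p' q' eps k
    \<and> (\<forall>\<psi> \<in> pres_hom Xt opt ut dt n p q eps k.
         card (lift_set X op u d n p q eps k \<psi>) \<noteq> 0 \<longrightarrow>
         (card (lift_set X op u d n p' q' eps k \<psi>) \<noteq> 0 \<longleftrightarrow>
          (\<forall>x\<in>X. (diag op ^^ (2 * N)) x = x)))"
proof -
  interpret finite_gl_rack X op u d
    using blockX by unfold_locales (simp_all add: block_gl_rack_def)
  have same_card: "\<And>x y. x \<in> X \<Longrightarrow> y \<in> X \<Longrightarrow> card (blk op x) = card (blk op y)"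
    using blockX unfolding block_gl_rack_def by blast
  have "0 < n"
    using n_pos by simp
  have "pres_hom Xt opt ut dt n p' q' eps k = pres_hom Xt opt ut dt n p q eps k"
    unfolding p'_def q'_def Xt_def opt_def ut_def dt_def by (rule pres_hom_stabilize_ind)
  moreover have "card (lift_set X op u d n p' q' eps k \<psi>) \<noteq> 0 \<longleftrightarrow> (\<forall>x\<in>X. (\<Delta> ^^ (2 * N)) x = x)"
    if "card (lift_set X op u d n p q eps k \<psi>) \<noteq> 0" for \<psi>
  proof -
    have "lift_set X op u d n p q eps k \<psi> \<noteq> {}"
      using that by auto
    then have "lift_set X op u d n p' q' eps k \<psi> \<noteq> {} \<longleftrightarrow> (\<forall>x\<in>X. (\<Delta> ^^ (2 * N)) x = x)"
      unfolding p'_def q'_def using lift_set_stabilized_nonempty_iff[OF same_card \<open>0 < n\<close> k_range] by blast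
    then show ?thesis
      by (simp add: card_eq_0_iff finite_lift_set)
  qed
  ultimately show ?thesis
    by simp
qed

end
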